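(* Let $2\sqrt2-2<a\le1$ and $f_a(z)=z\big(z^2+(a-2)z+1-2a\big)$. Define subintervals of $[-a,2]$: $$I_1=\Big[-a,\tfrac{2-a-\sqrt{a^2+4a}}2\Big],\ I_2=\Big[\tfrac{2-a-\sqrt{a^2+4a}}2,0\Big],\ I_3=[0,0.25],\ I_4=\Big[0.25,\tfrac{2-a+\sqrt{a^2+4a}}2\Big],\ I_5=\Big[\tfrac{2-a+\sqrt{a^2+4a}}2,2\Big].$$ Then (i) $f_a(I_1)=I_1\cup I_2$, $f_a(I_4)=I_1\cup I_2$, and $f_a(I_5)=I_3\cup I_4\cup I_5$; (ii) $f_a(I_2)\subseteq I_3$ and $f_a(I_3)\subseteq I_2$.
   Context: For a set $S$, $f(S)=\{f(x):x\in S\}$. *)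

theory Defs
  imports Complex_Main
begin

definition fa :: "real \<Rightarrow> real \<Rightarrow> real" where
  "fa a z = z * (z^2 + (a - 2) * z + 1 - 2 * a)"

end

theory Submission
  imports Defs
begin

text \<open>
  The quadratic factor of \<open>fa a\<close> has discriminant \<open>a\<^sup>2 + 4a\<close>, so \<open>fa a z = z (z - p) (z - q)\<close>
  with roots \<open>p \<le> 0 < 1 \<le> q\<close>; this fixes the sign of \<open>fa a\<close> on each interval. The identities
  \<open>fa a z + a = (z + a) (z - 1)\<^sup>2\<close> and \<open>fa a z - 2 = (z - 2) (z\<^sup>2 + a z + 1)\<close> show that
  \<open>-a \<le> fa a \<le> 2\<close> on \<open>[-a, 2]\<close>, with the extreme values attained at \<open>-a\<close>, \<open>1\<close> and \<open>2\<close>, and the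
  intermediate value theorem then gives the three image equalities.
\<close>

definition fa_root_lo :: "real \<Rightarrow> real" where
  "fa_root_lo a = (2 - a - sqrt (a^2 + 4*a)) / 2"

definition fa_root_hi :: "real \<Rightarrow> real" where
  "fa_root_hi a = (2 - a + sqrt (a^2 + 4*a)) / 2"

lemma atLeastAtMost_subset_image_continuous:
  fixes f :: "'a::linear_continuum_topology \<Rightarrow> 'b::linorder_topology"
  assumes "continuous_on {u..v} f" and "u \<le> v"
  shows "{f u..f v} \<subseteq> f ` {u..v}"
proof
  fix y assume "y \<in> {f u..f v}"
  then obtain x where "u \<le> x" "x \<le> v" "f x = y"
    using IVT'[of f u y v] assms by auto
  then show "y \<in> f ` {u..v}" by auto
qed

lemma image_eq_atLeastAtMost_continuous:
  fixes f :: "'a::linear_continuum_topology \<Rightarrow> 'b::linorder_topology"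
  assumes "f ` S \<subseteq> {c..d}" and "{u..v} \<subseteq> S" and "u \<le> v"
    and "continuous_on {u..v} f" and "f u = c" and "f v = d"
  shows "f ` S = {c..d}"
  using assms atLeastAtMost_subset_image_continuous[of u v f] by blast

lemma fa_continuous_on: "continuous_on S (fa a)"
  unfolding fa_def by (intro continuous_intros)

lemma fa_special_values: "fa a (-a) = -a" "fa a 1 = -a" "fa a 2 = 2"
  unfolding fa_def by (simp_all add: algebra_simps power2_eq_square)

lemma fa_factor:
  assumes "0 \<le> a^2 + 4*a"
  shows "fa a z = z * (z - fa_root_lo a) * (z - fa_root_hi a)"
proof -
  define s where "s = sqrt (a^2 + 4*a)"
  have s2: "s^2 = a^2 + 4*a"
    using assms unfolding s_def by simp
  have "(z - fa_root_lo a) * (z - fa_root_hi a) = z^2 - (2 - a)*z + ((2 - a)^2 - s^2)/4"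
    unfolding fa_root_lo_def fa_root_hi_def s_def by (simp add: field_simps power2_eq_square)
  also have "\<dots> = z^2 + (a - 2)*z + 1 - 2*a"
    using s2 by (simp add: field_simps power2_eq_square)
  finally show ?thesis
    unfolding fa_def by (simp add: mult.assoc)
qed

lemma fa_roots:
  assumes "0 \<le> a"
  shows "fa a (fa_root_lo a) = 0" and "fa a (fa_root_hi a) = 0"
  using assms by (simp_all add: fa_factor)

lemma fa_root_lo_ge:
  assumes "0 \<le> a"
  shows "-a \<le> fa_root_lo a"
proof -
  have "sqrt (a^2 + 4*a) \<le> a + 2"
    using assms by (intro real_le_lsqrt) (auto simp: power2_eq_square algebra_simps)
  then show ?thesis unfolding fa_root_lo_def by simp
qed

lemma fa_root_lo_nonpos:
  assumes "1/2 \<le> a"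
  shows "fa_root_lo a \<le> 0"
proof -
  have "2 - a \<le> sqrt (a^2 + 4*a)"
    using assms by (intro real_le_rsqrt) (auto simp: power2_eq_square algebra_simps)
  then show ?thesis unfolding fa_root_lo_def by simp
qed

lemma fa_root_hi_ge_1:
  assumes "0 \<le> a"
  shows "1 \<le> fa_root_hi a"
proof -
  have "a \<le> sqrt (a^2 + 4*a)"
    using assms by (intro real_le_rsqrt) auto
  then show ?thesis unfolding fa_root_hi_def by simp
qed

lemma fa_root_hi_le_2:
  assumes "0 \<le> a"
  shows "fa_root_hi a \<le> 2"
proof -
  have "sqrt (a^2 + 4*a) \<le> a + 2"
    using assms by (intro real_le_lsqrt) (auto simp: power2_eq_square algebra_simps)
  then show ?thesis unfolding fa_root_hi_def by simp
qed

lemma fa_nonpos_if_le_root_lo: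
  assumes "1/2 \<le> a" and "z \<le> fa_root_lo a"
  shows "fa a z \<le> 0"
proof -
  have "z \<le> 0" "1 \<le> fa_root_hi a"
    using assms fa_root_lo_nonpos[of a] fa_root_hi_ge_1[of a] by auto
  then have "z * (z - fa_root_lo a) * (z - fa_root_hi a) \<le> 0"
    using assms(2) by (intro mult_nonneg_nonpos mult_nonpos_nonpos) auto
  with assms(1) show ?thesis by (simp add: fa_factor)
qed

lemma fa_nonneg_if_between_root_lo_0:
  assumes "0 \<le> a" and "fa_root_lo a \<le> z" and "z \<le> 0"
  shows "0 \<le> fa a z"
proof -
  have "1 \<le> fa_root_hi a"
    using assms fa_root_hi_ge_1[of a] by auto
  then have "0 \<le> z * (z - fa_root_lo a) * (z - fa_root_hi a)"
    using assms by (intro mult_nonpos_nonpos mult_nonpos_nonneg) auto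
  with assms(1) show ?thesis by (simp add: fa_factor)
qed

lemma fa_nonpos_if_between_0_root_hi:
  assumes "1/2 \<le> a" and "0 \<le> z" and "z \<le> fa_root_hi a"
  shows "fa a z \<le> 0"
proof -
  have "fa_root_lo a \<le> 0"
    using assms fa_root_lo_nonpos[of a] by auto
  then have "z * (z - fa_root_lo a) * (z - fa_root_hi a) \<le> 0"
    using assms by (intro mult_nonneg_nonpos mult_nonneg_nonneg) auto
  with assms(1) show ?thesis by (simp add: fa_factor)
qed

lemma fa_nonneg_if_ge_root_hi:
  assumes "1/2 \<le> a" and "fa_root_hi a \<le> z"
  shows "0 \<le> fa a z"
proof -
  have "fa_root_lo a \<le> 0" "1 \<le> fa_root_hi a"
    using assms fa_root_lo_nonpos[of a] fa_root_hi_ge_1[of a] by auto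
  then have "0 \<le> z * (z - fa_root_lo a) * (z - fa_root_hi a)"
    using assms by (intro mult_nonneg_nonneg) auto
  with assms(1) show ?thesis by (simp add: fa_factor)
qed

lemma fa_ge_neg:
  assumes "-a \<le> z"
  shows "-a \<le> fa a z"
proof -
  have "fa a z + a = (z + a) * (z - 1)^2"
    unfolding fa_def by (simp add: algebra_simps power2_eq_square)
  moreover have "0 \<le> (z + a) * (z - 1)^2"
    using assms by simp
  ultimately show ?thesis by linarith
qed

lemma fa_le_2:
  assumes "a^2 \<le> 4" and "z \<le> 2"
  shows "fa a z \<le> 2"
proof -
  have "fa a z - 2 = (z - 2) * ((z + a/2)^2 + (1 - a^2/4))"
    unfolding fa_def by (simp add: field_simps power2_eq_square)
  moreover have "(z - 2) * ((z + a/2)^2 + (1 - a^2/4)) \<le> 0"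
    using assms by (intro mult_nonpos_nonneg) auto
  ultimately show ?thesis by linarith
qed

lemma fa_le_quarter:
  assumes "a \<le> 1" and "z \<le> 0"
  shows "fa a z \<le> 1/4"
proof -
  have "1/4 - fa a z = (z + 1/2)^2 + (-z)^3 + (1 - a) * (-z) * (2 - z)"
    unfolding fa_def by (simp add: algebra_simps power2_eq_square power3_eq_cube)
  moreover have "0 \<le> (1 - a) * (-z) * (2 - z)"
    using assms by (intro mult_nonneg_nonneg) auto
  moreover have "0 \<le> (-z)^3"
    using assms by simp
  ultimately show ?thesis
    using zero_le_power2[of "z + 1/2"] by linarith
qed

lemma fa_ge_on_quarter:
  assumes "1/2 \<le> a" and "a \<le> 2" and "0 \<le> z" and "z \<le> 1/4"
  shows "(2 - 7*a) / 16 \<le> fa a z"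
proof -
  have "fa a z - (2 - 7*a) / 16 = (2*a - 1) * (1/4 - z) + (2 - a) * (1/16 - z^2) + z^3"
    unfolding fa_def by (simp add: field_simps power2_eq_square power3_eq_cube)
  moreover have "z^2 \<le> (1/4)^2"
    using assms by (intro power_mono) auto
  then have "0 \<le> (2 - a) * (1/16 - z^2)"
    using assms by (intro mult_nonneg_nonneg) (auto simp: power2_eq_square)
  moreover have "0 \<le> (2*a - 1) * (1/4 - z)" "0 \<le> z^3"
    using assms by simp_all
  ultimately show ?thesis by linarith
qed

lemma fa_root_lo_le:
  assumes "2/3 \<le> a"
  shows "fa_root_lo a \<le> (2 - 7*a) / 16"
proof -
  have "(2/3)^2 \<le> a^2"
    using assms by (intro power_mono) auto
  then have "((14 - a) / 8)^2 \<le> a^2 + 4*a"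
    using assms by (simp add: power2_eq_square field_simps)
  then have "(14 - a) / 8 \<le> sqrt (a^2 + 4*a)"
    by (rule real_le_rsqrt)
  then show ?thesis
    unfolding fa_root_lo_def by simp
qed

lemma fa_image_left:
  assumes "1/2 \<le> a"
  shows "fa a ` {-a..fa_root_lo a} = {-a..0}"
  using assms fa_root_lo_ge[of a] fa_root_lo_nonpos[of a]
  by (intro image_eq_atLeastAtMost_continuous[where u = "-a" and v = "fa_root_lo a"])
    (auto simp: fa_special_values fa_continuous_on fa_roots intro!: fa_ge_neg fa_nonpos_if_le_root_lo)

lemma fa_image_middle:
  assumes "1/2 \<le> a"
  shows "fa a ` {1/4..fa_root_hi a} = {-a..0}"
  using assms fa_root_hi_ge_1[of a]
  by (intro image_eq_atLeastAtMost_continuous[where u = 1 and v = "fa_root_hi a"])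
    (auto simp: fa_special_values fa_continuous_on fa_roots intro!: fa_ge_neg fa_nonpos_if_between_0_root_hi)

lemma fa_image_right:
  assumes "1/2 \<le> a" and "a \<le> 2"
  shows "fa a ` {fa_root_hi a..2} = {0..2}"
proof -
  have "a^2 \<le> 2^2"
    using assms by (intro power_mono) auto
  then show ?thesis
    using assms fa_root_hi_ge_1[of a] fa_root_hi_le_2[of a]
    by (intro image_eq_atLeastAtMost_continuous[where u = "fa_root_hi a" and v = 2])
      (auto simp: fa_special_values fa_continuous_on fa_roots intro!: fa_le_2 fa_nonneg_if_ge_root_hi)
qed

lemma fa_image_root_lo_0_subset:
  assumes "0 \<le> a" and "a \<le> 1"
  shows "fa a ` {fa_root_lo a..0} \<subseteq> {0..1/4}"
  using assms fa_le_quarter[of a] by (auto intro!: fa_nonneg_if_between_root_lo_0)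

lemma fa_image_0_quarter_subset:
  assumes "2/3 \<le> a" and "a \<le> 2"
  shows "fa a ` {0..1/4} \<subseteq> {fa_root_lo a..0}"
proof (rule image_subsetI)
  fix z :: real
  assume "z \<in> {0..1/4}"
  then have z: "0 \<le> z" "z \<le> 1/4" by simp_all
  have "fa_root_lo a \<le> (2 - 7*a) / 16"
    using assms by (intro fa_root_lo_le)
  also have "\<dots> \<le> fa a z"
    using assms z by (intro fa_ge_on_quarter) auto
  finally show "fa a z \<in> {fa_root_lo a..0}"
    using assms z fa_root_hi_ge_1[of a] fa_nonpos_if_between_0_root_hi[of a z] by simp
qed

theorem lemma7:
  fixes a :: real
  assumes "2 * sqrt 2 - 2 < a" and "a \<le> 1"
  defines "I1 \<equiv> {-a .. (2 - a - sqrt (a^2 + 4*a)) / 2}"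
      and "I2 \<equiv> {(2 - a - sqrt (a^2 + 4*a)) / 2 .. 0}"
      and "I3 \<equiv> {0 .. 1/4}"
      and "I4 \<equiv> {1/4 .. (2 - a + sqrt (a^2 + 4*a)) / 2}"
      and "I5 \<equiv> {(2 - a + sqrt (a^2 + 4*a)) / 2 .. 2}"
  shows "fa a ` I1 = I1 \<union> I2 \<and> fa a ` I4 = I1 \<union> I2 \<and> fa a ` I5 = I3 \<union> I4 \<union> I5
         \<and> fa a ` I2 \<subseteq> I3 \<and> fa a ` I3 \<subseteq> I2"
proof -
  have "7/5 \<le> sqrt 2"
    by (rule real_le_rsqrt) (simp add: power2_eq_square)
  with assms have a: "4/5 < a" "a \<le> 1" by simp_all
  have I: "I1 = {-a..fa_root_lo a}" "I2 = {fa_root_lo a..0}"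
    "I4 = {1/4..fa_root_hi a}" "I5 = {fa_root_hi a..2}"
    unfolding I1_def I2_def I4_def I5_def fa_root_lo_def fa_root_hi_def by simp_all
  have "I1 \<union> I2 = {-a..0}" "I3 \<union> I4 \<union> I5 = {0..2}"
    using a fa_root_lo_ge[of a] fa_root_lo_nonpos[of a] fa_root_hi_ge_1[of a] fa_root_hi_le_2[of a]
    by (auto simp: I I3_def)
  then show ?thesis
    using a fa_image_left[of a] fa_image_middle[of a] fa_image_right[of a]
      fa_image_root_lo_0_subset[of a] fa_image_0_quarter_subset[of a]
    by (simp add: I I3_def)
qed

end
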